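(* Let $h$ be analytic in $\mathbb{D}=\{|z|<1\}$ and convex of order $1/2$, and let $u(z)=h(z)+\frac{1}{2}(1-|z|^{2})\,zh'(z)$. Then $u$ is univalent in $\mathbb{D}$.
   Context: A locally univalent analytic function $h$ in $\mathbb{D}$ is convex of order $\alpha$ if $\operatorname{Re}\big(1+zh''(z)/h'(z)\big)>\alpha$ for all $z\in\mathbb{D}$. *)

theory Defs
  imports "HOL-Complex_Analysis.Complex_Analysis"
begin

definition convex_of_order :: "real \<Rightarrow> (complex \<Rightarrow> complex) \<Rightarrow> bool" where
  "convex_of_order \<alpha> h \<longleftrightarrow>
     h holomorphic_on ball 0 1 \<and>
     (\<forall>z\<in>ball 0 1. deriv h z \<noteq> 0) \<and>
     (\<forall>z\<in>ball 0 1. Re (1 + z * deriv (deriv h) z / deriv h z) > \<alpha>)"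

end

theory Submission
  imports Defs
begin

(* Write p = 1 + z h''/h', so that Re p > 0 in the disc; only this, convexity of order 0,
   is used. On a circle z0 e^{2 pi i s} the tangent of the image curve h(z0 e^{2 pi i s}) turns
   at the rate 2 pi p, whose real part is positive and whose mean over the circle is p 0 = 1:
   the tangent turns monotonically exactly once, so the image curve lies strictly on the inner
   side of each of its tangents. The maximum principle carries this supporting-line property
   into the disc; hence h is univalent and maps the discs |z| < r onto convex sets.
   If u a = u b with a \<noteq> b, put d = h a - h b and follow the preimage under h of the segment
   from h b to h a. Along it Re (cnj d * u) has derivative
   |d|^2 (1 + (1 - |z|^2)/2 Re p) - (Re (z cnj v))^2 |h'|^2 \<ge> (1 - |z|^2) |d|^2 > 0,
   where v = d / h' is the velocity of the path; so it cannot take the same value at both ends. *)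

lemma convex_of_order_mono:
  assumes "convex_of_order \<alpha> h" "\<beta> \<le> \<alpha>"
  shows "convex_of_order \<beta> h"
  using assms by (auto simp: convex_of_order_def)

lemma has_integral_circle_mean_value:
  assumes "f holomorphic_on ball 0 R" "cmod w < R"
  shows "((\<lambda>s. f (w * exp (2 * pi * \<i> * of_real s))) has_integral f 0) {0..1}"
proof (cases "w = 0")
  case True
  then show ?thesis using has_integral_const_real[of "f 0" 0 1] by simp
next
  case False
  define r where "r = cmod w"
  define q where "q z = f (w / r * z)" for z
  have r: "0 < r" "r < R" using False assms(2) by (auto simp: r_def)
  have "cball 0 r \<subseteq> (\<lambda>z. w / r * z) -` ball 0 R"
    using r by (auto simp: norm_mult norm_divide r_def)
  then have "q holomorphic_on cball 0 r"
    unfolding q_def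
    by (intro holomorphic_on_compose_gen[OF _ assms(1), unfolded o_def] holomorphic_intros) auto
  then have "((\<lambda>z. q z / (z - 0)) has_contour_integral 2 * of_real pi * \<i> * q 0) (circlepath 0 r)"
    using r by (intro Cauchy_integral_circlepath holomorphic_on_imp_continuous_on)
      (auto intro: holomorphic_on_subset)
  moreover have "q (circlepath 0 r s) / (circlepath 0 r s - 0) * vector_derivative (circlepath 0 r) (at s)
      = 2 * of_real pi * \<i> * f (w * exp (2 * pi * \<i> * of_real s))" for s
    using r unfolding vector_derivative_circlepath
    by (simp add: q_def circlepath r_def field_simps)
  ultimately have "((\<lambda>s. 2 * of_real pi * \<i> * f (w * exp (2 * pi * \<i> * of_real s)))
      has_integral 2 * of_real pi * \<i> * f 0) {0..1}"
    by (simp add: has_contour_integral q_def)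
  from has_integral_mult_right[OF this, of "1 / (2 * of_real pi * \<i>)"] show ?thesis
    by simp
qed

lemma linear_ode_solution_exp_integral:
  fixes T g :: "real \<Rightarrow> complex"
  assumes g: "continuous_on {a..b} g"
    and T: "\<And>s. s \<in> {a..b} \<Longrightarrow> (T has_vector_derivative g s * T s) (at s within {a..b})"
    and s: "s \<in> {a..b}"
  shows "T s = T a * exp (integral {a..s} g)"
proof -
  define G where "G s = integral {a..s} g" for s
  have "((\<lambda>s. T s * exp (- G s)) has_vector_derivative 0) (at s within {a..b})"
    if "s \<in> {a..b}" for s
  proof -
    have "(G has_vector_derivative g s) (at s within {a..b})"
      unfolding G_def[abs_def] by (rule integral_has_vector_derivative[OF g that])
    then have "((\<lambda>s. - G s) has_vector_derivative - g s) (at s within {a..b})"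
      by (rule derivative_intros)
    from field_vector_diff_chain_within[OF this, of exp "exp (- G s)"]
    have "((\<lambda>s. exp (- G s)) has_vector_derivative - g s * exp (- G s)) (at s within {a..b})"
      by (simp add: o_def DERIV_exp has_field_derivative_at_within)
    from has_vector_derivative_mult[OF T[OF that] this] show ?thesis
      by (simp add: algebra_simps)
  qed
  then obtain c where c: "\<And>s. s \<in> {a..b} \<Longrightarrow> T s * exp (- G s) = c"
    using has_vector_derivative_zero_constant[of "{a..b}"] by blast
  have "a \<in> {a..b}" using s by simp
  then have "T s * exp (- G s) = T a" using c[OF s] c[of a] by (simp add: G_def)
  then show ?thesis by (simp add: G_def exp_minus field_simps)
qed

lemma strict_mono_on_Re_integral:
  fixes f :: "real \<Rightarrow> complex"
  assumes f: "continuous_on {a..b} f" and pos: "\<And>s. s \<in> {a..b} \<Longrightarrow> Re (f s) > 0"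
  shows "strict_mono_on {a..b} (\<lambda>s. Re (integral {a..s} f))"
proof (rule strict_mono_onI)
  fix x y assume xy: "x \<in> {a..b}" "y \<in> {a..b}" "x < y"
  have F: "((\<lambda>u. integral {a..u} f) has_vector_derivative f s) (at s within {a..b})"
    if "s \<in> {a..b}" for s
    by (rule integral_has_vector_derivative[OF f that])
  show "Re (integral {a..x} f) < Re (integral {a..y} f)"
  proof (rule DERIV_pos_imp_increasing_open[OF \<open>x < y\<close>])
    fix z assume z: "x < z" "z < y"
    then have "((\<lambda>u. integral {a..u} f) has_vector_derivative f z) (at z)"
      using F[of z] at_within_Icc_at[of a z b] xy by auto
    then show "\<exists>D. ((\<lambda>s. Re (integral {a..s} f)) has_real_derivative D) (at z) \<and> D > 0"
      using pos[of z] z xy by (auto intro: has_field_derivative_Re)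
  next
    have "continuous_on {a..b} (\<lambda>u. integral {a..u} f)"
      using F by (rule continuous_on_vector_derivative)
    then show "continuous_on {x..y} (\<lambda>s. Re (integral {a..s} f))"
      by (intro continuous_intros) (rule continuous_on_subset, use xy in auto)
  qed
qed

lemma closed_curve_left_of_initial_tangent:
  fixes \<Gamma> \<theta> :: "real \<Rightarrow> complex"
  assumes \<Gamma>': "\<And>s. s \<in> {0..1} \<Longrightarrow> (\<Gamma> has_vector_derivative T0 * exp (\<i> * \<theta> s)) (at s)"
    and closed: "\<Gamma> 1 = \<Gamma> 0"
    and mono: "strict_mono_on {0..1} (\<lambda>s. Re (\<theta> s))"
    and \<theta>0: "\<theta> 0 = 0" and \<theta>1: "Re (\<theta> 1) = 2 * pi"
    and "T0 \<noteq> 0" and t: "0 < t" "t < 1"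
  shows "Im (cnj T0 * (\<Gamma> t - \<Gamma> 0)) > 0"
proof -
  define \<psi> where "\<psi> s = Im (cnj T0 * (\<Gamma> s - \<Gamma> 0))" for s
  define D where "D s = (cmod T0)\<^sup>2 * exp (- Im (\<theta> s)) * sin (Re (\<theta> s))" for s
  have \<psi>': "DERIV \<psi> s :> D s" if "0 \<le> s" "s \<le> 1" for s
  proof -
    have "((\<lambda>s. cnj T0 * (\<Gamma> s - \<Gamma> 0)) has_vector_derivative cnj T0 * T0 * exp (\<i> * \<theta> s))
        (at s)"
      using \<Gamma>'[of s] that by (auto intro!: derivative_eq_intros)
    moreover have "cnj T0 * T0 = of_real ((cmod T0)\<^sup>2)"
      by (metis complex_norm_square mult.commute)
    ultimately show ?thesis
      unfolding \<psi>_def[abs_def] D_def by (auto dest!: has_field_derivative_Im simp: Im_exp mult.assoc)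
  qed
  have D_pos: "D s > 0" if "0 < Re (\<theta> s)" "Re (\<theta> s) < pi" for s
    using that \<open>T0 \<noteq> 0\<close> by (simp add: D_def sin_gt_zero)
  have D_neg: "D s < 0" if "pi < Re (\<theta> s)" "Re (\<theta> s) < 2 * pi" for s
    using that \<open>T0 \<noteq> 0\<close> by (simp add: D_def mult_pos_neg sin_lt_zero)
  have \<theta>_between: "Re (\<theta> x) < Re (\<theta> y)" if "0 \<le> x" "x < y" "y \<le> 1" for x y
    using strict_mono_onD[OF mono, of x y] that by auto
  show ?thesis
  proof (cases "Re (\<theta> t) \<le> pi")
    case True
    obtain \<xi> where \<xi>: "0 < \<xi>" "\<xi> < t" "\<psi> t - \<psi> 0 = (t - 0) * D \<xi>"
      using MVT2[OF \<open>0 < t\<close> \<psi>'] t by auto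
    have "D \<xi> > 0"
      using \<theta>_between[of 0 \<xi>] \<theta>_between[of \<xi> t] \<xi> t True \<theta>0 by (intro D_pos) auto
    with \<xi> t show ?thesis by (simp add: \<psi>_def)
  next
    case False
    obtain \<xi> where \<xi>: "t < \<xi>" "\<xi> < 1" "\<psi> 1 - \<psi> t = (1 - t) * D \<xi>"
      using MVT2[OF \<open>t < 1\<close> \<psi>'] t by auto
    have "D \<xi> < 0"
      using \<theta>_between[of t \<xi>] \<theta>_between[of \<xi> 1] \<xi> t False \<theta>1 by (intro D_neg) auto
    then have "\<psi> 1 - \<psi> t < 0" using \<xi> t by (simp add: mult_pos_neg)
    with closed show ?thesis by (simp add: \<psi>_def)
  qed
qed

lemma unit_circle_exp_2pi:
  assumes "cmod w = 1" "w \<noteq> 1"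
  obtains t where "0 < t" "t < 1" "w = exp (2 * pi * \<i> * of_real t)"
proof
  define t where "t = Arg2pi w / (2 * pi)"
  have w: "exp (\<i> * of_real (Arg2pi w)) = w"
    using assms(1) complex_norm_eq_1_exp by blast
  then show "w = exp (2 * pi * \<i> * of_real t)"
    by (simp add: t_def mult.commute)
  have "Arg2pi w \<noteq> 0"
    using w assms(2) by auto
  then show "0 < t" "t < 1"
    using Arg2pi_ge_0[of w] Arg2pi_lt_2pi[of w] by (auto simp: t_def)
qed

locale convex_map =
  fixes h :: "complex \<Rightarrow> complex"
  assumes convex: "convex_of_order 0 h"
begin

definition p :: "complex \<Rightarrow> complex" where
  "p z = 1 + z * deriv (deriv h) z / deriv h z"

lemma holomorphic: "h holomorphic_on ball 0 1"
  and deriv_nonzero: "z \<in> ball 0 1 \<Longrightarrow> deriv h z \<noteq> 0"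
  and Re_p_pos: "z \<in> ball 0 1 \<Longrightarrow> Re (p z) > 0"
  using convex by (auto simp: convex_of_order_def p_def)

lemma deriv_holomorphic: "deriv h holomorphic_on ball 0 1"
  using holomorphic by (rule holomorphic_deriv) simp

lemma has_field_derivative_h:
  "z \<in> ball 0 1 \<Longrightarrow> (h has_field_derivative deriv h z) (at z)"
  using holomorphic holomorphic_derivI[of h "ball 0 1" z UNIV] by simp

lemma has_field_derivative_deriv_h:
  "z \<in> ball 0 1 \<Longrightarrow> (deriv h has_field_derivative deriv (deriv h) z) (at z)"
  using deriv_holomorphic holomorphic_derivI[of "deriv h" "ball 0 1" z UNIV] by simp

lemma p_holomorphic: "p holomorphic_on ball 0 1"
  unfolding p_def[abs_def]
  by (intro holomorphic_intros holomorphic_deriv deriv_holomorphic) (auto simp: deriv_nonzero)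

lemma p_mult_deriv: "z \<in> ball 0 1 \<Longrightarrow> p z * deriv h z = deriv h z + z * deriv (deriv h) z"
  using deriv_nonzero[of z] by (simp add: p_def distrib_right)

(* The tangent of h (z0 e^{2 pi i s}) is 2 pi i z0 h'(z0) e^{i tangent_angle z0 s};
   the real part of tangent_angle is the angle through which it has turned. *)
definition tangent_angle :: "complex \<Rightarrow> real \<Rightarrow> complex" where
  "tangent_angle z0 s = integral {0..s} (\<lambda>\<sigma>. 2 * pi * p (z0 * exp (2 * pi * \<i> * of_real \<sigma>)))"

lemma continuous_on_p_circle:
  assumes "cmod z0 < 1"
  shows "continuous_on S (\<lambda>s. p (z0 * exp (2 * pi * \<i> * of_real s)))"
  using assms
  by (intro continuous_intros continuous_on_compose2[OF holomorphic_on_imp_continuous_on[OF p_holomorphic]])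
    (auto simp: norm_mult)

lemma has_vector_derivative_circle_image:
  assumes z0: "cmod z0 < 1" and s: "s \<in> {0..1}"
  shows "((\<lambda>s. h (z0 * exp (2 * pi * \<i> * of_real s))) has_vector_derivative
           2 * pi * \<i> * z0 * deriv h z0 * exp (\<i> * tangent_angle z0 s)) (at s)"
proof -
  define c where "c s = z0 * exp (2 * pi * \<i> * of_real s)" for s
  define T where "T s = deriv h (c s) * (2 * pi * \<i> * c s)" for s
  define f where "f s = 2 * pi * p (c s)" for s
  have c_in: "c s \<in> ball 0 1" for s
    using z0 by (simp add: c_def norm_mult)
  have c': "(c has_vector_derivative 2 * pi * \<i> * c s) (at s)" for s
  proof -
    have "((\<lambda>w. z0 * exp (2 * pi * \<i> * w)) has_field_derivative 2 * pi * \<i> * c s) (at (of_real s))"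
      by (auto intro!: derivative_eq_intros simp: c_def)
    from has_vector_derivative_real_field[OF this] show ?thesis by (simp add: c_def[abs_def])
  qed
  have T': "(T has_vector_derivative \<i> * f s * T s) (at s within {0..1})" for s
  proof -
    have "((\<lambda>s. deriv h (c s)) has_vector_derivative 2 * pi * \<i> * c s * deriv (deriv h) (c s)) (at s)"
      using field_vector_diff_chain_at[OF c' has_field_derivative_deriv_h[OF c_in]] by (simp add: o_def)
    moreover have "((\<lambda>s. 2 * pi * \<i> * c s) has_vector_derivative 2 * pi * \<i> * (2 * pi * \<i> * c s)) (at s)"
      using c' by (rule derivative_intros)
    ultimately have "(T has_vector_derivative deriv h (c s) * (2 * pi * \<i> * (2 * pi * \<i> * c s))
        + 2 * pi * \<i> * c s * deriv (deriv h) (c s) * (2 * pi * \<i> * c s)) (at s)"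
      unfolding T_def[abs_def] by (rule has_vector_derivative_mult)
    moreover have "deriv h (c s) * (2 * pi * \<i> * (2 * pi * \<i> * c s))
        + 2 * pi * \<i> * c s * deriv (deriv h) (c s) * (2 * pi * \<i> * c s) = \<i> * f s * T s"
      using p_mult_deriv[OF c_in[of s]] unfolding f_def T_def by algebra
    ultimately show ?thesis by (simp add: has_vector_derivative_at_within)
  qed
  have "continuous_on {0..1} (\<lambda>s. \<i> * f s)"
    unfolding f_def c_def by (intro continuous_intros continuous_on_p_circle z0)
  from linear_ode_solution_exp_integral[OF this T' s]
  have "T s = 2 * pi * \<i> * z0 * deriv h z0 * exp (\<i> * tangent_angle z0 s)"
    by (simp add: tangent_angle_def f_def T_def c_def mult_ac)
  moreover have "((\<lambda>s. h (c s)) has_vector_derivative T s) (at s)"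
    using field_vector_diff_chain_at[OF c' has_field_derivative_h[OF c_in]]
    by (simp add: T_def o_def mult.commute)
  ultimately show ?thesis
    by (simp add: c_def)
qed

lemma tangent_angle_full_turn:
  assumes "cmod z0 < 1"
  shows "Re (tangent_angle z0 1) = 2 * pi"
proof -
  have "((\<lambda>s. 2 * pi * p (z0 * exp (2 * pi * \<i> * of_real s))) has_integral 2 * pi * p 0) {0..1}"
    by (intro has_integral_mult_right has_integral_circle_mean_value[OF p_holomorphic assms])
  then have "tangent_angle z0 1 = 2 * pi * p 0"
    unfolding tangent_angle_def by (rule integral_unique)
  then show ?thesis
    by (simp add: p_def)
qed

lemma strict_mono_on_Re_tangent_angle:
  assumes "cmod z0 < 1"
  shows "strict_mono_on {0..1} (\<lambda>s. Re (tangent_angle z0 s))"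
  unfolding tangent_angle_def using assms
  by (intro strict_mono_on_Re_integral continuous_intros continuous_on_p_circle)
    (use Re_p_pos in \<open>auto simp: norm_mult\<close>)

lemma supporting_line_circle:
  assumes z0: "cmod z0 < 1" "z0 \<noteq> 0" and t: "0 < t" "t < 1"
  shows "Re (cnj (z0 * deriv h z0) * (h (z0 * exp (2 * pi * \<i> * of_real t)) - h z0)) < 0"
proof -
  define \<Gamma> where "\<Gamma> s = h (z0 * exp (2 * pi * \<i> * of_real s))" for s
  define T0 where "T0 = 2 * pi * \<i> * z0 * deriv h z0"
  have "(\<Gamma> has_vector_derivative T0 * exp (\<i> * tangent_angle z0 s)) (at s)" if "s \<in> {0..1}" for s
    unfolding \<Gamma>_def[abs_def] T0_def by (rule has_vector_derivative_circle_image[OF z0(1) that])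
  moreover have "\<Gamma> 1 = \<Gamma> 0"
    by (simp add: \<Gamma>_def exp_two_pi_i)
  moreover have "tangent_angle z0 0 = 0"
    by (simp add: tangent_angle_def)
  moreover have "T0 \<noteq> 0"
    using deriv_nonzero[of z0] z0 by (simp add: T0_def)
  ultimately have "Im (cnj T0 * (\<Gamma> t - \<Gamma> 0)) > 0"
    using strict_mono_on_Re_tangent_angle[OF z0(1)] tangent_angle_full_turn[OF z0(1)] t
    by (intro closed_curve_left_of_initial_tangent)
  moreover define X where "X = cnj (z0 * deriv h z0) * (\<Gamma> t - \<Gamma> 0)"
  then have "cnj T0 * (\<Gamma> t - \<Gamma> 0) = - (2 * pi * \<i>) * X"
    by (simp add: T0_def)
  ultimately have "2 * pi * Re X < 0"
    by simp
  then have "Re X < 0"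
    by (simp add: mult_less_0_iff)
  moreover have "\<Gamma> 0 = h z0"
    by (simp add: \<Gamma>_def)
  ultimately show ?thesis
    by (simp only: X_def \<Gamma>_def)
qed

lemma supporting_line_sphere:
  assumes z0: "cmod z0 < 1" "z0 \<noteq> 0" and z: "cmod z = cmod z0" "z \<noteq> z0"
  shows "Re (cnj (z0 * deriv h z0) * (h z - h z0)) < 0"
proof -
  have "cmod (z / z0) = 1" "z / z0 \<noteq> 1"
    using z z0 by (auto simp: norm_divide)
  then obtain t where t: "0 < t" "t < 1" "z / z0 = exp (2 * pi * \<i> * of_real t)"
    by (rule unit_circle_exp_2pi)
  then have "z = z0 * exp (2 * pi * \<i> * of_real t)"
    using z0 by (simp add: field_simps)
  with supporting_line_circle[OF z0 t(1,2)] show ?thesis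
    by simp
qed

lemma supporting_line:
  assumes z0: "cmod z0 < 1" "z0 \<noteq> 0" and z: "cmod z \<le> cmod z0" "z \<noteq> z0"
  shows "Re (cnj (z0 * deriv h z0) * (h z - h z0)) < 0"
proof (cases "cmod z = cmod z0")
  case True
  with supporting_line_sphere[OF z0] z show ?thesis by blast
next
  case False
  define r where "r = cmod z0"
  define F where "F w = cnj (z0 * deriv h z0) * (h w - h z0)" for w
  have r: "0 < r" "cball 0 r \<subseteq> ball 0 1"
    using z0 by (auto simp: r_def)
  have F_hol: "F holomorphic_on cball 0 r"
    unfolding F_def[abs_def] by (intro holomorphic_intros holomorphic_on_subset[OF holomorphic r(2)])
  have F_le: "Re (F w) \<le> 0" if "w \<in> cball 0 r" for w
  proof (rule maximum_real_frontier[OF _ _ _ _ that])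
    show "F holomorphic_on interior (cball 0 r)" "continuous_on (closure (cball 0 r)) F"
      using F_hol by (auto intro: holomorphic_on_subset holomorphic_on_imp_continuous_on)
    fix v :: complex assume "v \<in> frontier (cball 0 r)"
    then have "cmod v = cmod z0" using r by (simp add: r_def frontier_cball)
    then show "Re (F v) \<le> 0"
      using supporting_line_sphere[OF z0, of v] by (cases "v = z0") (auto simp: F_def)
  qed simp
  have "\<not> F constant_on ball 0 r"
  proof
    assume "F constant_on ball 0 r"
    then have "F constant_on cball 0 r"
      using constant_on_closureI[of F "ball 0 r"] F_hol r(1)
      by (simp add: holomorphic_on_imp_continuous_on)
    moreover have "- z0 \<in> cball 0 r" "z0 \<in> cball 0 r"
      by (simp_all add: r_def)
    ultimately have "F (- z0) = F z0"
      by (auto simp: constant_on_def)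
    moreover have "Re (F (- z0)) < 0"
      using supporting_line_sphere[OF z0, of "- z0"] z0 by (simp add: F_def)
    moreover have "F z0 = 0"
      by (simp add: F_def)
    ultimately show False
      by simp
  qed
  moreover have "z \<in> ball 0 r"
    using z False by (simp add: r_def)
  ultimately have "open (F ` ball 0 r)" "F z \<in> F ` ball 0 r"
    using F_hol by (auto intro!: open_mapping_thm[where S = "ball 0 r"] intro: holomorphic_on_subset)
  then obtain e where "e > 0" "ball (F z) e \<subseteq> F ` ball 0 r"
    by (meson openE)
  then have "F z + of_real (e / 2) \<in> F ` ball 0 r"
    by (auto simp: dist_norm)
  then obtain w where "w \<in> ball 0 r" and w: "F z + of_real (e / 2) = F w"
    by (rule imageE)
  then have "Re (F z) + e / 2 \<le> 0"
    using F_le[of w] by (simp add: w[symmetric])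
  with \<open>e > 0\<close> show ?thesis
    by (simp add: F_def)
qed

lemma injective: "inj_on h (ball 0 1)"
proof -
  have "h b \<noteq> h a" if "a \<in> ball 0 1" "cmod b \<le> cmod a" "b \<noteq> a" for a b
  proof -
    have "a \<noteq> 0"
      using that by auto
    then have "Re (cnj (a * deriv h a) * (h b - h a)) < 0"
      using supporting_line[of a b] that by simp
    then show ?thesis by auto
  qed
  then show ?thesis
    unfolding inj_on_def by (metis linear)
qed

lemma convex_image_ball:
  assumes "r < 1"
  shows "convex (h ` ball 0 r)"
  unfolding convex_contains_segment
proof (intro ballI)
  fix x y assume "x \<in> h ` ball 0 r" "y \<in> h ` ball 0 r"
  then obtain a b where ab: "a \<in> ball 0 r" "b \<in> ball 0 r" "x = h a" "y = h b"
    by blast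
  define S where "S = h ` ball 0 r"
  have sub: "cball 0 r \<subseteq> ball 0 1"
    using assms by auto
  have "ball 0 r \<subseteq> ball 0 1"
    using assms by auto
  then have "open S"
    unfolding S_def
    by (intro open_mapping_thm3 holomorphic_on_subset[OF holomorphic] inj_on_subset[OF injective]) auto
  have closure_S: "closure S \<subseteq> h ` cball 0 r"
  proof (rule closure_minimal)
    have "compact (h ` cball 0 r)"
      using sub holomorphic
      by (intro compact_continuous_image) (auto intro: holomorphic_on_imp_continuous_on holomorphic_on_subset)
    then show "closed (h ` cball 0 r)"
      by (rule compact_imp_closed)
  qed (auto simp: S_def)
  show "closed_segment x y \<subseteq> h ` ball 0 r"
  proof (rule ccontr)
    assume "\<not> closed_segment x y \<subseteq> h ` ball 0 r"
    moreover have "x \<in> closed_segment x y \<inter> S"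
      using ab by (simp add: S_def)
    ultimately obtain w where w: "w \<in> closed_segment x y" "w \<in> frontier S"
      using connected_Int_frontier[of "closed_segment x y" S] by (auto simp: S_def)
    then have "w \<in> closure S" "w \<notin> S"
      using \<open>open S\<close> by (auto simp: frontier_def interior_open)
    then obtain v where v: "cmod v = r" "w = h v"
      using closure_S by (force simp: S_def)
    then have "cmod v < 1" "v \<noteq> 0"
      using assms ab by auto
    define n where "n = cnj (v * deriv h v)"
    have "Re (n * (x - h v)) < 0" "Re (n * (y - h v)) < 0"
      unfolding n_def ab(3,4)
      by (rule supporting_line[OF \<open>cmod v < 1\<close> \<open>v \<noteq> 0\<close>]; use ab v in force)+
    moreover obtain t where t: "0 \<le> t" "t \<le> 1" "w = (1 - t) *\<^sub>R x + t *\<^sub>R y"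
      using w(1) by (auto simp: in_segment)
    ultimately have "(1 - t) * Re (n * (x - h v)) + t * Re (n * (y - h v)) < 0"
      by (intro convex_bound_lt) auto
    moreover have "(1 - t) * Re (n * (x - h v)) + t * Re (n * (y - h v)) = Re (n * (w - h v))"
      unfolding t(3) by (simp add: scaleR_conv_of_real algebra_simps)
    ultimately show False
      using v by simp
  qed
qed

lemma convex_image: "convex (h ` ball 0 1)"
  unfolding convex_contains_segment
proof (intro ballI)
  fix x y assume "x \<in> h ` ball 0 1" "y \<in> h ` ball 0 1"
  then obtain a b where ab: "a \<in> ball 0 1" "b \<in> ball 0 1" "x = h a" "y = h b"
    by blast
  define r where "r = (max (cmod a) (cmod b) + 1) / 2"
  have r: "r < 1" "a \<in> ball 0 r" "b \<in> ball 0 r"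
    using ab by (auto simp: r_def)
  then have "closed_segment x y \<subseteq> h ` ball 0 r"
    using ab convex_image_ball[OF r(1)] by (auto simp: convex_contains_segment)
  also have "\<dots> \<subseteq> h ` ball 0 1"
    using r(1) by (intro image_mono) auto
  finally show "closed_segment x y \<subseteq> h ` ball 0 1" .
qed

lemma preimage_of_segment:
  assumes a: "a \<in> ball 0 1" and b: "b \<in> ball 0 1"
  obtains \<gamma> where "\<gamma> 0 = b" "\<gamma> 1 = a"
    "\<And>x. x \<in> {0..1} \<Longrightarrow> \<gamma> x \<in> ball 0 1 \<and> (\<gamma> has_vector_derivative (h a - h b) / deriv h (\<gamma> x)) (at x)"
proof -
  obtain g where g: "g holomorphic_on h ` ball 0 1"
      "\<And>z. z \<in> ball 0 1 \<Longrightarrow> deriv h z * deriv g (h z) = 1"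
      "\<And>z. z \<in> ball 0 1 \<Longrightarrow> g (h z) = z"
    using holomorphic_has_inverse[OF holomorphic open_ball injective] by blast
  have "open (h ` ball 0 1)"
    by (rule open_mapping_thm3[OF holomorphic open_ball injective])
  define d where "d = h a - h b"
  define \<gamma> where "\<gamma> x = g (h b + of_real x * d)" for x
  show ?thesis
  proof
    show "\<gamma> 0 = b" "\<gamma> 1 = a"
      using g(3) a b by (simp_all add: \<gamma>_def d_def)
    fix x :: real assume x: "x \<in> {0..1}"
    have "h b + of_real x * d \<in> closed_segment (h b) (h a)"
      using x by (auto simp: in_segment d_def scaleR_conv_of_real algebra_simps intro!: exI[of _ x])
    also have "\<dots> \<subseteq> h ` ball 0 1"
      using convex_image a b by (simp add: convex_contains_segment)
    finally obtain z where z: "z \<in> ball 0 1" "h b + of_real x * d = h z"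
      by blast
    then have \<gamma>x: "\<gamma> x = z"
      using g(3) by (simp add: \<gamma>_def)
    have "(g has_field_derivative deriv g (h z)) (at (h b + of_real x * d))"
      using holomorphic_derivI[OF g(1) \<open>open (h ` ball 0 1)\<close>] z by simp
    then have "((\<lambda>w. g (h b + w * d)) has_field_derivative deriv g (h z) * d) (at (of_real x))"
      by (rule DERIV_chain2) (auto intro!: derivative_eq_intros)
    from has_vector_derivative_real_field[OF this]
    have "(\<gamma> has_vector_derivative deriv g (h z) * d) (at x)"
      by (simp add: \<gamma>_def[abs_def])
    moreover have "deriv g (h z) = 1 / deriv h z"
      using g(2)[OF z(1)] deriv_nonzero[OF z(1)] by (simp add: field_simps)
    ultimately show "\<gamma> x \<in> ball 0 1 \<and> (\<gamma> has_vector_derivative (h a - h b) / deriv h (\<gamma> x)) (at x)"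
      using z(1) by (simp add: \<gamma>x d_def)
  qed
qed

definition u :: "complex \<Rightarrow> complex" where
  "u z = h z + (1/2) * complex_of_real (1 - (cmod z)^2) * z * deriv h z"

(* u is only real differentiable; this is its derivative at z in the direction v. *)
definition u_directional_deriv :: "complex \<Rightarrow> complex \<Rightarrow> complex" where
  "u_directional_deriv z v =
     v * deriv h z * (1 + (1 - of_real ((cmod z)^2)) / 2 * p z) - of_real (Re (z * cnj v)) * z * deriv h z"

lemma has_vector_derivative_u_comp:
  assumes \<gamma>: "(\<gamma> has_vector_derivative v) (at x)" and z: "\<gamma> x \<in> ball 0 1"
  shows "((\<lambda>s. u (\<gamma> s)) has_vector_derivative u_directional_deriv (\<gamma> x) v) (at x)"
proof -
  define z where "z = \<gamma> x"
  define k where "k = deriv h z"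
  define k2 where "k2 = deriv (deriv h) z"
  have u_eq: "u = (\<lambda>z. h z + 1/2 * (1 - z * cnj z) * z * deriv h z)"
    by (auto simp: fun_eq_iff u_def complex_norm_square[symmetric])
  have h\<gamma>: "((\<lambda>s. h (\<gamma> s)) has_vector_derivative v * k) (at x)"
    using field_vector_diff_chain_at[OF \<gamma> has_field_derivative_h[OF z]] by (simp add: o_def z_def k_def)
  have k\<gamma>: "((\<lambda>s. deriv h (\<gamma> s)) has_vector_derivative v * k2) (at x)"
    using field_vector_diff_chain_at[OF \<gamma> has_field_derivative_deriv_h[OF z]] by (simp add: o_def z_def k2_def)
  define E where "E = v * k + (1/2 * (1 - z * cnj z) * z * (v * k2)
    + (1/2 * (1 - z * cnj z) * v + 1/2 * (- (z * cnj v + v * cnj z)) * z) * k)"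
  have "((\<lambda>s. u (\<gamma> s)) has_vector_derivative E) (at x)"
    unfolding u_eq E_def
    apply (rule has_vector_derivative_eq_rhs)
     apply (rule derivative_intros h\<gamma> k\<gamma> \<gamma> | simp only: z_def[symmetric] k_def[symmetric])+
    apply (simp add: algebra_simps)
    done
  moreover have "E = u_directional_deriv z v"
  proof -
    have "z * cnj z = of_real ((cmod z)^2)"
      by (metis complex_norm_square of_real_power)
    moreover have "z * cnj v + v * cnj z = 2 * of_real (Re (z * cnj v))"
      using complex_add_cnj[of "z * cnj v"] by (simp add: mult.commute)
    moreover have "z * k2 = p z * k - k"
      using p_mult_deriv[OF z] by (simp add: z_def k_def k2_def)
    ultimately show ?thesis
      unfolding E_def u_directional_deriv_def k_def[symmetric] by (simp add: field_simps) algebra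
  qed
  ultimately show ?thesis
    by (simp add: z_def)
qed

lemma Re_u_directional_deriv_pos:
  assumes z: "z \<in> ball 0 1" and "v \<noteq> 0"
  shows "Re (cnj (v * deriv h z) * u_directional_deriv z v) > 0"
proof -
  define k where "k = deriv h z"
  define d where "d = v * k"
  define X where "X = z * cnj v"
  have "d \<noteq> 0"
    using deriv_nonzero[OF z] \<open>v \<noteq> 0\<close> by (simp add: d_def k_def)
  have "cnj d * u_directional_deriv z v
      = (cnj d * d) * (1 + (1 - of_real ((cmod z)^2)) / 2 * p z) - of_real (Re X) * (cnj d * z * k)"
    unfolding u_directional_deriv_def k_def[symmetric] d_def[symmetric] X_def[symmetric]
    by (simp add: algebra_simps)
  also have "cnj d * d = of_real ((cmod d)^2)"
    by (metis complex_norm_square mult.commute of_real_power)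
  also have "cnj d * z * k = X * (cnj k * k)"
    by (simp add: d_def X_def algebra_simps)
  also have "cnj k * k = of_real ((cmod k)^2)"
    by (metis complex_norm_square mult.commute of_real_power)
  finally have "cnj d * u_directional_deriv z v
      = of_real ((cmod d)^2) * (1 + (1 - of_real ((cmod z)^2)) / 2 * p z) - of_real (Re X * (cmod k)^2) * X"
    by (simp add: algebra_simps)
  then have Re_eq: "Re (cnj d * u_directional_deriv z v)
      = (cmod d)^2 * (1 + (1 - (cmod z)^2) / 2 * Re (p z)) - (Re X)^2 * (cmod k)^2"
    by (simp add: power2_eq_square)
  have "(Re X)^2 \<le> (cmod X)^2"
    using abs_Re_le_cmod[of X] by (metis abs_le_square_iff abs_norm_cancel)
  then have "(Re X)^2 * (cmod k)^2 \<le> (cmod X)^2 * (cmod k)^2"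
    by (simp add: mult_right_mono)
  also have "\<dots> = (cmod z)^2 * (cmod d)^2"
    by (simp add: X_def d_def norm_mult power_mult_distrib)
  finally have "(Re X)^2 * (cmod k)^2 \<le> (cmod z)^2 * (cmod d)^2" .
  moreover have "(cmod z)^2 < 1"
    using z by (simp add: power_less_one_iff)
  moreover have "0 \<le> (cmod d)^2 * ((1 - (cmod z)^2) / 2 * Re (p z))"
    using Re_p_pos[OF z] \<open>(cmod z)^2 < 1\<close> by simp
  ultimately have "Re (cnj d * u_directional_deriv z v) \<ge> (cmod d)^2 - (cmod z)^2 * (cmod d)^2"
    unfolding Re_eq distrib_left mult_1_right by linarith
  moreover have "(cmod d)^2 - (cmod z)^2 * (cmod d)^2 > 0"
    using \<open>(cmod z)^2 < 1\<close> \<open>d \<noteq> 0\<close> by (simp add: algebra_simps)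
  ultimately show ?thesis
    by (simp add: d_def k_def)
qed

theorem inj_on_u: "inj_on u (ball 0 1)"
proof (rule inj_onI, rule ccontr)
  fix a b assume ab: "a \<in> ball 0 1" "b \<in> ball 0 1" "u a = u b" "a \<noteq> b"
  define d where "d = h a - h b"
  have "d \<noteq> 0"
    using injective ab by (auto simp: d_def inj_on_def)
  obtain \<gamma> where \<gamma>: "\<gamma> 0 = b" "\<gamma> 1 = a"
    "\<And>x. x \<in> {0..1} \<Longrightarrow> \<gamma> x \<in> ball 0 1 \<and> (\<gamma> has_vector_derivative d / deriv h (\<gamma> x)) (at x)"
    using preimage_of_segment[OF ab(1,2)] unfolding d_def by blast
  have "Re (cnj d * u (\<gamma> 0)) < Re (cnj d * u (\<gamma> 1))"
  proof (rule DERIV_pos_imp_increasing[where f = "\<lambda>s. Re (cnj d * u (\<gamma> s))"])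
    fix x :: real assume "0 \<le> x" "x \<le> 1"
    then have x: "\<gamma> x \<in> ball 0 1" "(\<gamma> has_vector_derivative d / deriv h (\<gamma> x)) (at x)"
      using \<gamma>(3) by auto
    have "d / deriv h (\<gamma> x) * deriv h (\<gamma> x) = d" "d / deriv h (\<gamma> x) \<noteq> 0"
      using deriv_nonzero[OF x(1)] \<open>d \<noteq> 0\<close> by simp_all
    then have "Re (cnj d * u_directional_deriv (\<gamma> x) (d / deriv h (\<gamma> x))) > 0"
      using Re_u_directional_deriv_pos[OF x(1)] by metis
    moreover have "((\<lambda>s. cnj d * u (\<gamma> s)) has_vector_derivative
        cnj d * u_directional_deriv (\<gamma> x) (d / deriv h (\<gamma> x))) (at x)"
      using has_vector_derivative_u_comp[OF x(2) x(1)] by (rule derivative_intros)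
    note has_field_derivative_Re[OF this]
    ultimately show "\<exists>D. ((\<lambda>s. Re (cnj d * u (\<gamma> s))) has_real_derivative D) (at x) \<and> D > 0"
      by blast
  qed simp
  with ab(3) \<gamma>(1,2) show False
    by simp
qed

end

theorem corollary3:
  fixes h :: "complex \<Rightarrow> complex"
  assumes "h holomorphic_on ball 0 1"
    and "convex_of_order (1/2) h"
  shows "inj_on (\<lambda>z. h z + (1/2) * complex_of_real (1 - (cmod z)^2) * z * deriv h z) (ball 0 1)"
proof -
  interpret convex_map h
    by unfold_locales (rule convex_of_order_mono[OF assms(2)], simp)
  show ?thesis
    using inj_on_u by (simp add: u_def[abs_def])
qed

end
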